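(* Let $A$ be a semiprime Archimedean $f$-algebra over $\mathbb{K}$. If $A$ is geometric mean closed, then for all $f,g\in A^{+}$ the element $(fg)^{1/2}$ exists and $f\boxtimes g=(fg)^{1/2}$.
   Context: $\mathbb{K}$ denotes $\mathbb{R}$ or $\mathbb{C}$. An Archimedean real vector lattice $E$ is square mean closed if $\sup\{(\cos\theta)f+(\sin\theta)g:\theta\in[0,2\pi]\}$ exists in $E$ for all $f,g\in E$. An Archimedean vector lattice over $\mathbb{C}$ is a complex vector space $E+iE$ (complexification) where $E$ is a square mean closed Archimedean real vector lattice; its modulus is $|f+ig|=\sup\{(\cos\theta)f+(\sin\theta)g:\theta\in[0,2\pi]\}$. An Archimedean vector lattice over $\mathbb{R}$ is an Archimedean real vector lattice with $|f|=f\vee(-f)$. For an Archimedean vector lattice $E$ over $\mathbb{K}$: positive cone $E^{+}=\{f\in E:|f|=f\}$, real part $E_\rho=\{f-g:f,g\in E^+\}$ (so $E=E_\rho$ or $E=E_\rho+iE_\rho$), with the order of $E_\rho$. $E$ is geometric mean closed if $\inf\{\theta f+\theta^{-1}g:\theta\in(0,\infty)\}$ exists in $E_\rho$ for all $f,g\in E^+$, and then $f\boxtimes g=2^{-1}\inf\{\theta f+\theta^{-1}g:\theta\in(0,\infty)\}$. An Archimedean $f$-algebra over $\mathbb{K}$ is an Archimedean vector lattice $A$ over $\mathbb{K}$ such that $A_\rho$ is an $f$-algebra (in the complex case the multiplication is extended complex-bilinearly to $A_\rho+iA_\rho$). It is semiprime if it has no nonzero nilpotent elements. For $a\in A^+$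 and $n\in\mathbb{N}$, $a^{1/n}$ denotes the unique $r\in A^+$ with $r^n=a$ (when it exists and is unique). *)

theory Defs
  imports "HOL-Analysis.Analysis"
begin

(* The real part A_rho of the algebra is modelled by a type 'a that is a real
   (not necessarily unital, not necessarily commutative) associative algebra,
   an ordered real vector space, and a lattice w.r.t. the same order. *)

definition is_sup_of :: "'a::order set \<Rightarrow> 'a \<Rightarrow> bool" where
  "is_sup_of S s \<longleftrightarrow> (\<forall>x\<in>S. x \<le> s) \<and> (\<forall>u. (\<forall>x\<in>S. x \<le> u) \<longrightarrow> s \<le> u)"

definition is_inf_of :: "'a::order set \<Rightarrow> 'a \<Rightarrow> bool" where
  "is_inf_of S s \<longleftrightarrow> (\<forall>x\<in>S. s \<le> x) \<and> (\<forall>u. (\<forall>x\<in>S. u \<le> x) \<longrightarrow> u \<le> s)"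

definition archimedean_vl :: "'a::{ordered_real_vector,lattice} itself \<Rightarrow> bool" where
  "archimedean_vl _ \<longleftrightarrow>
     (\<forall>f g::'a. 0 \<le> f \<and> (\<forall>n::nat. real n *\<^sub>R f \<le> g) \<longrightarrow> f = 0)"

definition square_mean_closed :: "'a::{ordered_real_vector,lattice} itself \<Rightarrow> bool" where
  "square_mean_closed _ \<longleftrightarrow>
     (\<forall>f g::'a. \<exists>s. is_sup_of {cos \<theta> *\<^sub>R f + sin \<theta> *\<^sub>R g | \<theta>. \<theta> \<in> {0..2*pi}} s)"

definition f_algebra :: "'a::{real_algebra,ordered_real_vector,lattice} itself \<Rightarrow> bool" where
  "f_algebra _ \<longleftrightarrow>
     (\<forall>a b::'a. 0 \<le> a \<and> 0 \<le> b \<longrightarrow> 0 \<le> a * b) \<and>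
     (\<forall>f g h::'a. inf f g = 0 \<and> 0 \<le> h \<longrightarrow> inf (h * f) g = 0 \<and> inf (f * h) g = 0)"

(* npow a n = a^(n+1)  (the algebra need not be unital) *)
fun npow :: "'a::times \<Rightarrow> nat \<Rightarrow> 'a" where
  "npow a 0 = a"
| "npow a (Suc n) = a * npow a n"

(* complexification A_rho + i A_rho, elements as pairs (real part, imaginary part) *)
definition cmult :: "'a::ring \<times> 'a \<Rightarrow> 'a \<times> 'a \<Rightarrow> 'a \<times> 'a" where
  "cmult z w = (fst z * fst w - snd z * snd w, fst z * snd w + snd z * fst w)"

fun cnpow :: "'a::ring \<times> 'a \<Rightarrow> nat \<Rightarrow> 'a \<times> 'a" where
  "cnpow z 0 = z"
| "cnpow z (Suc n) = cmult z (cnpow z n)"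

(* K_is_C = False : K = R ;  K_is_C = True : K = C *)
definition archimedean_f_algebra_over :: "bool \<Rightarrow> 'a::{real_algebra,ordered_real_vector,lattice} itself \<Rightarrow> bool" where
  "archimedean_f_algebra_over K_is_C T \<longleftrightarrow>
     archimedean_vl T \<and> f_algebra T \<and> (K_is_C \<longrightarrow> square_mean_closed T)"

definition semiprime_over :: "bool \<Rightarrow> 'a::{real_algebra,ordered_real_vector,lattice} itself \<Rightarrow> bool" where
  "semiprime_over K_is_C _ \<longleftrightarrow>
     (if K_is_C then (\<forall>z::'a \<times> 'a. (\<exists>n. cnpow z n = (0, 0)) \<longrightarrow> z = (0, 0))
      else (\<forall>a::'a. (\<exists>n. npow a n = 0) \<longrightarrow> a = 0))"

definition geometric_mean_closed :: "'a::{ordered_real_vector,lattice} itself \<Rightarrow> bool" where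
  "geometric_mean_closed _ \<longleftrightarrow>
     (\<forall>f g::'a. 0 \<le> f \<and> 0 \<le> g \<longrightarrow>
        (\<exists>s. is_inf_of {\<theta> *\<^sub>R f + inverse \<theta> *\<^sub>R g | \<theta>. \<theta> > 0} s))"

definition gmean :: "'a::{ordered_real_vector,lattice} \<Rightarrow> 'a \<Rightarrow> 'a" (infixl "\<boxtimes>" 70) where
  "f \<boxtimes> g = (1/2) *\<^sub>R (THE s. is_inf_of {\<theta> *\<^sub>R f + inverse \<theta> *\<^sub>R g | \<theta>. \<theta> > 0} s)"

definition nth_root_exists :: "nat \<Rightarrow> 'a::{real_algebra,ordered_real_vector,lattice} \<Rightarrow> bool" where
  "nth_root_exists n a \<longleftrightarrow> (\<exists>!r. 0 \<le> r \<and> npow r (n - 1) = a)"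

definition nth_root_A :: "nat \<Rightarrow> 'a::{real_algebra,ordered_real_vector,lattice} \<Rightarrow> 'a" where
  "nth_root_A n a = (THE r. 0 \<le> r \<and> npow r (n - 1) = a)"

end

(*
  For positive a in an f-algebra, T w = a w + w a and T w = w\<^sup>2 preserve finite infima of
  positive elements. Hence a bound q \<le> T |x - \<lambda> a| holding for every \<lambda> passes to the infimum of
  |x - (j/n) a| over j \<le> n\<^sup>2, which is at most a/n + (x - n a)\<^sup>+; in the applications the
  image of this under T is O(1/n), and the Archimedean property finishes.
  With |ab - ba| \<le> a|b - \<lambda>a| + |b - \<lambda>a|a this shows that Archimedean f-algebras are commutative;
  with s\<^sup>2 - 4fg \<le> (s - 2\<theta>f)\<^sup>2 for the infimum s of \<theta>f + \<theta>\<inverse>g it gives s\<^sup>2 \<le> 4fg.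
  Conversely s dominates the finite infimum of \<theta>f + \<theta>\<inverse>g over a geometric grid of \<theta>, whose
  square is at least 4fg - O(1/n) by AM-GM; hence s\<^sup>2 = 4fg. Finally s/2 is the only positive
  square root of fg, since in a semiprime f-algebra r\<^sup>2 = t\<^sup>2 with r, t \<ge> 0 forces r = t.
*)

theory Submission
  imports Defs "HOL-Library.Lattice_Algebras"
begin

section \<open>Vector lattices\<close>

definition lattice_abs :: "'a::{ordered_ab_group_add,lattice} \<Rightarrow> 'a" where
  "lattice_abs x = sup x (- x)"

interpretation vl: lattice_ab_group_add_abs lattice_abs "(+)" "0::'a::{ordered_ab_group_add,lattice}"
  "(-)" uminus "(\<le>)" "(<)" inf sup
  by unfold_locales (rule lattice_abs_def)

text \<open>The library's De Morgan simp rules interfere with the \<open>pprt\<close>/\<open>nprt\<close> calculations below.\<close>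

declare vl.neg_inf_eq_sup[simp del] vl.neg_sup_eq_inf[simp del]
  vl.diff_inf_eq_sup[simp del] vl.diff_sup_eq_inf[simp del]

context
  fixes x y :: "'a::{ordered_ab_group_add,lattice}"
begin

lemma diff_inf_eq_pprt: "x - inf x y = vl.pprt (x - y)"
  by (simp add: vl.pprt_def vl.diff_inf_eq_sup vl.add_sup_distrib_left sup_commute)

lemma inf_eq_diff_pprt: "inf x y = x - vl.pprt (x - y)"
  using diff_inf_eq_pprt by (simp add: algebra_simps)

lemma inf_pprt_neg_nprt: "inf (vl.pprt x) (- vl.nprt x) = 0"
proof -
  have "- vl.nprt x = vl.pprt x - x"
    using vl.prts[of x] by (simp add: algebra_simps)
  then have "inf (vl.pprt x) (- vl.nprt x) = vl.pprt x + inf 0 (- x)"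
    by (simp add: vl.add_inf_distrib_left)
  also have "inf 0 (- x) = - vl.pprt x"
    by (simp add: vl.pprt_def vl.neg_sup_eq_inf inf_commute)
  finally show ?thesis by simp
qed

end

lemma inf_sup_distrib_le:
  fixes a b c :: "'a::{ordered_ab_group_add,lattice}"
  shows "inf a (sup b c) \<le> sup (inf a b) (inf a c)"
proof -
  define u where "u = sup (inf a b) (inf a c)"
  define w where "w = sup b c"
  have "b = inf a b + vl.pprt (b - a)"
    using diff_inf_eq_pprt[of b a] by (simp add: inf_commute algebra_simps)
  also have "\<dots> \<le> u + vl.pprt (w - a)"
    unfolding u_def w_def by (intro add_mono vl.pprt_mono diff_right_mono) simp_all
  finally have "b \<le> u + vl.pprt (w - a)" .
  moreover have "c = inf a c + vl.pprt (c - a)"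
    using diff_inf_eq_pprt[of c a] by (simp add: inf_commute algebra_simps)
  moreover have "\<dots> \<le> u + vl.pprt (w - a)"
    unfolding u_def w_def by (intro add_mono vl.pprt_mono diff_right_mono) simp_all
  ultimately have "w \<le> u + vl.pprt (w - a)"
    unfolding w_def by simp
  then have "w - vl.pprt (w - a) \<le> u"
    by (simp add: algebra_simps)
  then show ?thesis
    using inf_eq_diff_pprt[of w a] by (simp add: inf_commute u_def w_def)
qed

lemma inf_pprt_eq_pprt_inf:
  fixes z c :: "'a::{ordered_ab_group_add,lattice}"
  assumes "0 \<le> c"
  shows "inf (vl.pprt z) c = vl.pprt (inf z c)"
proof (rule antisym)
  have "inf c (sup z 0) \<le> sup (inf c z) (inf c 0)"
    by (rule inf_sup_distrib_le)
  then show "inf (vl.pprt z) c \<le> vl.pprt (inf z c)"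
    using assms by (simp add: vl.pprt_def inf_commute inf_absorb1)
  show "vl.pprt (inf z c) \<le> inf (vl.pprt z) c"
    using assms by (simp add: vl.pprt_def le_infI1)
qed

lemma pprt_diff_eq_if_disjoint:
  fixes p q :: "'a::{ordered_ab_group_add,lattice}"
  assumes "inf p q = 0"
  shows "vl.pprt (p - q) = p"
proof -
  have "vl.pprt (p - q) = sup p q - q"
    using vl.add_sup_distrib_right[of p q "- q"] by (simp add: vl.pprt_def)
  also have "sup p q = p + q - inf p q"
    using vl.add_eq_inf_sup[of p q] by (simp add: algebra_simps)
  finally show ?thesis using assms by simp
qed

lemma inf_add_eq_0:
  fixes u v w :: "'a::{ordered_ab_group_add,lattice}"
  assumes "0 \<le> u" "0 \<le> v" "0 \<le> w" "inf u w = 0" "inf v w = 0"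
  shows "inf (u + v) w = 0"
proof (rule antisym)
  have "inf (u + v) w \<le> inf (inf (u + v) (u + w)) (inf (w + v) (w + w))"
    using assms(1-3) by (auto intro: le_infI2 add_increasing add_increasing2)
  also have "\<dots> = inf u w + inf v w"
    by (simp add: vl.add_inf_distrib_left vl.add_inf_distrib_right inf_aci add.commute)
  finally show "inf (u + v) w \<le> 0" using assms(4,5) by simp
  show "0 \<le> inf (u + v) w" using assms(1-3) by simp
qed

lemma additive_disjointness_preserving_inf:
  fixes T :: "'a::{ordered_ab_group_add,lattice} \<Rightarrow> 'b::{ordered_ab_group_add,lattice}"
  assumes add: "\<And>x y. T (x + y) = T x + T y"
    and disj: "\<And>x y. 0 \<le> x \<Longrightarrow> 0 \<le> y \<Longrightarrow> inf x y = 0 \<Longrightarrow> inf (T x) (T y) = 0"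
  shows "T (inf x y) = inf (T x) (T y)"
proof -
  have diff: "T (a - b) = T a - T b" for a b
    using add[of "a - b" b] by (simp add: algebra_simps)
  have pprt: "T (vl.pprt z) = vl.pprt (T z)" for z
  proof -
    have "T z = T (vl.pprt z) - T (- vl.nprt z)"
      using diff[of "vl.pprt z" "- vl.nprt z"] vl.prts[of z] by simp
    moreover have "inf (T (vl.pprt z)) (T (- vl.nprt z)) = 0"
      using disj inf_pprt_neg_nprt[of z] by simp
    ultimately show ?thesis using pprt_diff_eq_if_disjoint by metis
  qed
  show ?thesis by (simp add: inf_eq_diff_pprt diff pprt)
qed

lemma archimedean_le_0:
  fixes x k :: "'a::{ordered_real_vector,lattice}"
  assumes "archimedean_vl TYPE('a)" and k: "0 \<le> k"
    and le: "\<And>n::nat. n \<ge> 1 \<Longrightarrow> x \<le> (1 / real n) *\<^sub>R k"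
  shows "x \<le> 0"
proof -
  have "real n *\<^sub>R vl.pprt x \<le> k" for n :: nat
  proof (cases "n = 0")
    case False
    then have "vl.pprt x \<le> (1 / real n) *\<^sub>R k"
      using le[of n] k by (simp add: vl.pprt_def scaleR_nonneg_nonneg)
    then have "real n *\<^sub>R vl.pprt x \<le> real n *\<^sub>R ((1 / real n) *\<^sub>R k)"
      by (rule scaleR_left_mono) simp
    then show ?thesis using False by simp
  qed (simp add: k)
  then have "vl.pprt x = 0" using assms(1) vl.zero_le_pprt[of x] unfolding archimedean_vl_def by blast
  then show ?thesis by (simp add: vl.le_zero_iff_zero_pprt)
qed

section \<open>Finite infima along a grid\<close>

lemma hom_Inf_fin_on:
  fixes T :: "'a::semilattice_inf \<Rightarrow> 'b::semilattice_inf"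
  assumes "finite A" "A \<noteq> {}" "A \<subseteq> D"
    and closed: "\<And>x y. x \<in> D \<Longrightarrow> y \<in> D \<Longrightarrow> inf x y \<in> D"
    and hom: "\<And>x y. x \<in> D \<Longrightarrow> y \<in> D \<Longrightarrow> T (inf x y) = inf (T x) (T y)"
  shows "Inf_fin A \<in> D \<and> T (Inf_fin A) = Inf_fin (T ` A)"
  using assms(1-3)
proof (induction A rule: finite_ne_induct)
  case (insert a A)
  then show ?case by (simp add: closed hom)
qed simp

definition grid_inf :: "'a::{ordered_real_vector,lattice} \<Rightarrow> 'a \<Rightarrow> nat \<Rightarrow> 'a" where
  "grid_inf x c N = Inf_fin ((\<lambda>j. lattice_abs (x - real j *\<^sub>R c)) ` {..N})"

lemma grid_inf_0 [simp]: "grid_inf x c 0 = lattice_abs x"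
  by (simp add: grid_inf_def)

lemma grid_inf_Suc:
  "grid_inf x c (Suc N) = inf (lattice_abs (x - real (Suc N) *\<^sub>R c)) (grid_inf x c N)"
  by (simp add: grid_inf_def atMost_Suc)

lemma grid_inf_nonneg: "0 \<le> grid_inf x c N"
  by (induction N) (simp_all add: grid_inf_Suc)

lemma le_map_grid_inf:
  fixes T :: "'a::{ordered_real_vector,lattice} \<Rightarrow> 'b::lattice"
  assumes "\<And>x y. 0 \<le> x \<Longrightarrow> 0 \<le> y \<Longrightarrow> T (inf x y) = inf (T x) (T y)"
    and "\<And>j. j \<le> N \<Longrightarrow> q \<le> T (lattice_abs (x - real j *\<^sub>R c))"
  shows "q \<le> T (grid_inf x c N)"
proof -
  have "T (grid_inf x c N) = Inf_fin (T ` (\<lambda>j. lattice_abs (x - real j *\<^sub>R c)) ` {..N})"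
    unfolding grid_inf_def by (rule conjunct2, rule hom_Inf_fin_on[where D = "{x. 0 \<le> x}"])
      (auto simp: assms(1))
  then show ?thesis by (auto intro!: Inf_fin.boundedI assms(2))
qed

lemma inf_add_pprt_abs_le:
  fixes z c :: "'a::{ordered_ab_group_add,lattice}"
  assumes c: "0 \<le> c"
  shows "inf (c + vl.pprt z) (lattice_abs (z - c)) \<le> c + vl.pprt (z - c)"
proof -
  define w where "w = inf z c"
  have "vl.pprt (vl.pprt z - c) = vl.pprt (z - c)"
  proof -
    have "vl.pprt z - c = sup (z - c) (- c)"
      using vl.add_sup_distrib_right[of z 0 "- c"] by (simp add: vl.pprt_def)
    then show ?thesis using c by (simp add: vl.pprt_def sup_assoc sup_absorb2)
  qed
  then have "vl.pprt z = vl.pprt w + vl.pprt (z - c)"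
    using diff_inf_eq_pprt[of "vl.pprt z" c] inf_pprt_eq_pprt_inf[OF c, of z]
    by (simp add: w_def algebra_simps)
  moreover have "lattice_abs (z - c) = vl.pprt (z - c) + (- vl.nprt (z - c))"
    by (simp add: vl.abs_prts)
  moreover have "- vl.nprt (z - c) = c - w"
    by (simp add: vl.nprt_def w_def vl.neg_inf_eq_sup vl.diff_inf_eq_sup
        vl.add_sup_distrib_left algebra_simps)
  ultimately have "inf (c + vl.pprt z) (lattice_abs (z - c))
      = vl.pprt (z - c) + (c + inf (vl.pprt w) (- w))"
    by (simp add: vl.add_inf_distrib_left flip: add.assoc) (simp add: algebra_simps)
  moreover have "inf (vl.pprt w) (- w) \<le> inf (vl.pprt w) (- vl.nprt w)"
    by (intro inf_mono) (simp_all add: vl.nprt_def)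
  ultimately show ?thesis using inf_pprt_neg_nprt[of w] by (simp add: algebra_simps)
qed

lemma grid_inf_le:
  fixes x c :: "'a::{ordered_real_vector,lattice}"
  assumes x: "0 \<le> x" and c: "0 \<le> c"
  shows "grid_inf x c N \<le> c + vl.pprt (x - real N *\<^sub>R c)"
proof (induction N)
  case 0
  show ?case using x c by (simp add: add_increasing)
next
  case (Suc N)
  define z where "z = x - real N *\<^sub>R c"
  have z: "x - real (Suc N) *\<^sub>R c = z - c"
    by (simp add: z_def algebra_simps scaleR_left_distrib)
  have "grid_inf x c (Suc N) = inf (grid_inf x c N) (lattice_abs (z - c))"
    by (simp only: grid_inf_Suc z inf_commute)
  also have "\<dots> \<le> inf (c + vl.pprt z) (lattice_abs (z - c))"
    using Suc.IH by (simp add: z_def le_infI1)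
  also have "\<dots> \<le> c + vl.pprt (z - c)" by (rule inf_add_pprt_abs_le[OF c])
  finally show ?case by (simp only: z)
qed

lemma grid_inf_le_of_lower_bound:
  fixes s f g :: "'a::{ordered_real_vector,lattice}"
  assumes f: "0 \<le> f" and g: "0 \<le> g" and s: "0 \<le> s" and n: "n \<ge> 1"
    and lower: "s \<le> real n *\<^sub>R f + inverse (real n) *\<^sub>R g"
  shows "grid_inf s ((2 / real n) *\<^sub>R f) (n * n) \<le> (1 / real n) *\<^sub>R (2 *\<^sub>R f + g)"
proof -
  define c where "c = (2 / real n) *\<^sub>R f"
  have c: "0 \<le> c" using f by (simp add: c_def scaleR_nonneg_nonneg)
  have "(2 * real n) *\<^sub>R f = real n *\<^sub>R f + real n *\<^sub>R f"
    by (simp flip: scaleR_add_left)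
  then have "s - (2 * real n) *\<^sub>R f \<le> inverse (real n) *\<^sub>R g - real n *\<^sub>R f"
    using lower by (simp add: diff_le_eq add.commute)
  also have "\<dots> \<le> inverse (real n) *\<^sub>R g" using f by (simp add: scaleR_nonneg_nonneg)
  finally have "vl.pprt (s - real (n * n) *\<^sub>R c) \<le> inverse (real n) *\<^sub>R g"
    using n g by (simp add: c_def vl.pprt_def scaleR_nonneg_nonneg mult.commute)
  then have "c + vl.pprt (s - real (n * n) *\<^sub>R c) \<le> c + inverse (real n) *\<^sub>R g"
    by (rule add_left_mono)
  also have "\<dots> = (1 / real n) *\<^sub>R (2 *\<^sub>R f + g)"
    by (simp add: c_def scaleR_add_right divide_inverse)
  finally show ?thesis
    using grid_inf_le[OF s c, of "n * n"] by (simp add: c_def)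
qed

section \<open>Archimedean f-algebras\<close>

context
  assumes FA: "f_algebra TYPE('a::{real_algebra,ordered_real_vector,lattice})"
begin

lemma f_algebra_mult_nonneg: "0 \<le> a \<Longrightarrow> 0 \<le> b \<Longrightarrow> 0 \<le> a * (b::'a)"
  using FA by (simp add: f_algebra_def)

lemma f_algebra_inf_mult_eq_0:
  assumes "inf x y = 0" "0 \<le> (h::'a)"
  shows "inf (h * x) y = 0" "inf (x * h) y = 0"
  using FA assms by (simp_all add: f_algebra_def)

lemma f_algebra_mult_left_mono: "0 \<le> h \<Longrightarrow> x \<le> y \<Longrightarrow> h * x \<le> h * (y::'a)"
  using f_algebra_mult_nonneg[of h "y - x"] by (simp add: right_diff_distrib)

lemma f_algebra_mult_right_mono: "0 \<le> h \<Longrightarrow> x \<le> y \<Longrightarrow> x * h \<le> y * (h::'a)"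
  using f_algebra_mult_nonneg[of "y - x" h] by (simp add: left_diff_distrib)

lemma f_algebra_disjoint_mult_eq_0:
  assumes "0 \<le> a" "0 \<le> b" "inf a b = (0::'a)"
  shows "a * b = 0"
proof -
  have "inf (a * b) a = 0"
    using assms f_algebra_inf_mult_eq_0(1)[of b a a] by (simp add: inf_commute)
  then have "inf (a * b) (a * b) = 0"
    using assms f_algebra_inf_mult_eq_0(2)[of a "a * b" b] by (simp add: inf_commute)
  then show ?thesis by simp
qed

lemma f_algebra_inf_two_sided_mult_eq_0:
  assumes "0 \<le> h" "0 \<le> x" "0 \<le> y" "inf x y = (0::'a)"
  shows "inf (h * x + x * h) y = 0"
  using assms by (intro inf_add_eq_0 f_algebra_inf_mult_eq_0 f_algebra_mult_nonneg)

lemma f_algebra_pprt_mult_nprt: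
  "vl.pprt x * vl.nprt x = 0" "vl.nprt x * vl.pprt (x::'a) = 0"
  using f_algebra_disjoint_mult_eq_0[of "vl.pprt x" "- vl.nprt x"]
    f_algebra_disjoint_mult_eq_0[of "- vl.nprt x" "vl.pprt x"] inf_pprt_neg_nprt[of x]
  by (simp_all add: inf_commute)

lemma f_algebra_square_eq: "x * x = vl.pprt x * vl.pprt x + vl.nprt x * vl.nprt (x::'a)"
proof -
  have "x * x = (vl.pprt x + vl.nprt x) * (vl.pprt x + vl.nprt x)"
    using vl.prts[of x] by (rule arg_cong[where f = "\<lambda>y. y * y"])
  then show ?thesis by (simp add: algebra_simps f_algebra_pprt_mult_nprt)
qed

lemma f_algebra_square_nonneg: "0 \<le> x * (x::'a)"
  using f_algebra_mult_nonneg[of "vl.pprt x" "vl.pprt x"]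
    f_algebra_mult_nonneg[of "- vl.nprt x" "- vl.nprt x"] f_algebra_square_eq[of x]
  by simp

lemma f_algebra_abs_square: "lattice_abs x * lattice_abs x = x * (x::'a)"
  by (simp add: vl.abs_prts f_algebra_square_eq[of x] algebra_simps f_algebra_pprt_mult_nprt)

lemma f_algebra_mult_pprt:
  "x * vl.pprt x = vl.pprt x * vl.pprt x" "vl.pprt x * x = vl.pprt x * vl.pprt (x::'a)"
proof -
  have "x * vl.pprt x = (vl.pprt x + vl.nprt x) * vl.pprt x"
    "vl.pprt x * x = vl.pprt x * (vl.pprt x + vl.nprt x)"
    using vl.prts[of x] by simp_all
  then show "x * vl.pprt x = vl.pprt x * vl.pprt x" "vl.pprt x * x = vl.pprt x * vl.pprt x"
    by (simp_all add: algebra_simps f_algebra_pprt_mult_nprt)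
qed

lemma f_algebra_abs_mult_le:
  assumes "0 \<le> (a::'a)"
  shows "lattice_abs (a * e) \<le> a * lattice_abs e" "lattice_abs (e * a) \<le> lattice_abs e * a"
proof -
  have "a * e \<le> a * lattice_abs e" "a * - e \<le> a * lattice_abs e"
    by (intro f_algebra_mult_left_mono assms vl.abs_ge_self vl.abs_ge_minus_self)+
  then show "lattice_abs (a * e) \<le> a * lattice_abs e" by (metis vl.abs_leI mult_minus_right)
  have "e * a \<le> lattice_abs e * a" "- e * a \<le> lattice_abs e * a"
    by (intro f_algebra_mult_right_mono assms vl.abs_ge_self vl.abs_ge_minus_self)+
  then show "lattice_abs (e * a) \<le> lattice_abs e * a" by (metis vl.abs_leI mult_minus_left)
qed

lemma f_algebra_square_mono: "0 \<le> a \<Longrightarrow> a \<le> b \<Longrightarrow> a * a \<le> b * (b::'a)"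
  by (meson f_algebra_mult_left_mono f_algebra_mult_right_mono order_trans)

lemma f_algebra_mult_pprt_diff_le:
  fixes a b :: 'a and t :: real
  assumes a: "0 \<le> a" and b: "0 \<le> b" and t: "0 < t"
  defines "p \<equiv> vl.pprt (b - t *\<^sub>R a)"
  shows "a * p \<le> (1 / t) *\<^sub>R (b * b)" "p * a \<le> (1 / t) *\<^sub>R (b * b)"
proof -
  have ta: "0 \<le> t *\<^sub>R a" using a t by (simp add: scaleR_nonneg_nonneg)
  have p: "0 \<le> p" "p \<le> b" unfolding p_def vl.pprt_def using ta b by auto
  have "(b - t *\<^sub>R a) * p = p * p" "p * (b - t *\<^sub>R a) = p * p"
    unfolding p_def by (rule f_algebra_mult_pprt)+
  moreover have "0 \<le> p * p" using p by (intro f_algebra_mult_nonneg)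
  ultimately have "t *\<^sub>R (a * p) \<le> b * p" "t *\<^sub>R (p * a) \<le> p * b"
    by (simp_all add: algebra_simps)
  moreover have "b * p \<le> b * b" "p * b \<le> b * b"
    using p b by (auto intro: f_algebra_mult_left_mono f_algebra_mult_right_mono)
  ultimately have "t *\<^sub>R (a * p) \<le> b * b" "t *\<^sub>R (p * a) \<le> b * b"
    by (meson order_trans)+
  then show "a * p \<le> (1 / t) *\<^sub>R (b * b)" "p * a \<le> (1 / t) *\<^sub>R (b * b)"
    by (simp_all add: pos_le_divideR_eq[OF t] divide_inverse_commute)
qed

lemma f_algebra_two_sided_mult_inf:
  assumes a: "0 \<le> (a::'a)"
  shows "a * inf x y + inf x y * a = inf (a * x + x * a) (a * y + y * a)"
proof (rule additive_disjointness_preserving_inf[where T = "\<lambda>w. a * w + w * a"])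
  show "a * (x + y) + (x + y) * a = (a * x + x * a) + (a * y + y * a)" for x y
    by (simp add: algebra_simps)
next
  fix x y :: 'a assume xy: "0 \<le> x" "0 \<le> y" "inf x y = 0"
  then have "inf y (a * x + x * a) = 0"
    using f_algebra_inf_two_sided_mult_eq_0[OF a] by (simp add: inf_commute)
  then have "inf (a * y + y * a) (a * x + x * a) = 0"
    using f_algebra_inf_two_sided_mult_eq_0[OF a] xy a
    by (simp add: add_nonneg_nonneg f_algebra_mult_nonneg)
  then show "inf (a * x + x * a) (a * y + y * a) = 0" by (simp add: inf_commute)
qed

lemma f_algebra_abs_commutator_le:
  fixes a b :: 'a and r :: real
  assumes a: "0 \<le> a"
  defines "e \<equiv> b - r *\<^sub>R a"
  shows "lattice_abs (a * b - b * a) \<le> a * lattice_abs e + lattice_abs e * a"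
proof -
  have "a * b - b * a = a * e + - (e * a)" by (simp add: e_def algebra_simps)
  then have "lattice_abs (a * b - b * a) \<le> lattice_abs (a * e) + lattice_abs (e * a)"
    using vl.abs_triangle_ineq[of "a * e" "- (e * a)"] by simp
  also have "\<dots> \<le> a * lattice_abs e + lattice_abs e * a"
    by (intro add_mono f_algebra_abs_mult_le[OF a])
  finally show ?thesis .
qed

lemma f_algebra_square_inf:
  assumes a: "0 \<le> a" and b: "0 \<le> (b::'a)"
  shows "inf a b * inf a b = inf (a * a) (b * b)"
proof -
  txt \<open>With \<open>m = inf a b\<close>, the parts \<open>a - m\<close> and \<open>b - m\<close> are disjoint, and so are the
    terms by which \<open>a * a\<close> and \<open>b * b\<close> exceed \<open>m * m\<close>.\<close>
  have disj: "inf (h * x + x * h + x * x) y = 0"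
    if "0 \<le> h" "0 \<le> x" "0 \<le> y" "inf x y = 0" for h x y :: 'a
    using that by (intro inf_add_eq_0 f_algebra_inf_two_sided_mult_eq_0 f_algebra_inf_mult_eq_0
        f_algebra_mult_nonneg add_nonneg_nonneg)
  define m where "m = inf a b"
  define a' where "a' = a - m"
  define b' where "b' = b - m"
  define X where "X = m * a' + a' * m + a' * a'"
  define Y where "Y = m * b' + b' * m + b' * b'"
  have m: "0 \<le> m" and a': "0 \<le> a'" and b': "0 \<le> b'"
    using a b by (simp_all add: m_def a'_def b'_def)
  have "inf a' b' = inf a b - m"
    using vl.add_inf_distrib_right[of a b "- m"] by (simp add: a'_def b'_def)
  then have "inf X b' = 0"
    unfolding X_def by (intro disj m a' b') (simp add: m_def)
  then have "inf Y X = 0"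
    unfolding Y_def using m a' b' f_algebra_mult_nonneg
    by (intro disj) (simp_all add: X_def add_nonneg_nonneg inf_commute)
  moreover have "a * a = m * m + X" "b * b = m * m + Y"
    by (simp_all add: X_def Y_def a'_def b'_def algebra_simps)
  ultimately show ?thesis
    by (simp add: m_def flip: vl.add_inf_distrib_left) (simp add: inf_commute)
qed

end

lemma semiprime_square_eq_0:
  fixes a :: "'a::{real_algebra,ordered_real_vector,lattice}"
  assumes "semiprime_over K TYPE('a)" and "a * a = 0"
  shows "a = 0"
proof (cases K)
  case True
  have "cnpow (a, 0) 1 = (0, 0)" using assms by (simp add: cmult_def)
  then have "\<exists>n. cnpow (a, 0) n = (0, 0)" by blast
  then show ?thesis using assms True unfolding semiprime_over_def by auto
next
  case False
  have "npow a 1 = 0" using assms by simp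
  then have "\<exists>n. npow a n = 0" by blast
  then show ?thesis using assms False unfolding semiprime_over_def by auto
qed

context
  assumes FA: "f_algebra TYPE('a::{real_algebra,ordered_real_vector,lattice})"
    and AR: "archimedean_vl TYPE('a)"
begin

lemma f_algebra_commute_nonneg:
  assumes a: "0 \<le> a" and b: "0 \<le> (b::'a)"
  shows "a * b = b * a"
proof -
  define T where "T w = a * w + w * a" for w
  define M where "M = 2 *\<^sub>R (a * a + b * b)"
  have "lattice_abs (a * b - b * a) \<le> (1 / real n) *\<^sub>R M" if n: "n \<ge> 1" for n
  proof -
    define c where "c = (1 / real n) *\<^sub>R a"
    define p where "p = vl.pprt (b - real n *\<^sub>R a)"
    have c: "0 \<le> c" using a by (simp add: c_def scaleR_nonneg_nonneg)
    have "lattice_abs (a * b - b * a) \<le> T (grid_inf b c (n * n))"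
    proof (rule le_map_grid_inf)
      show "T (inf x y) = inf (T x) (T y)" for x y
        unfolding T_def by (rule f_algebra_two_sided_mult_inf[OF FA a])
      show "lattice_abs (a * b - b * a) \<le> T (lattice_abs (b - real j *\<^sub>R c))" for j
        using f_algebra_abs_commutator_le[OF FA a, of b "real j / real n"] by (simp add: T_def c_def)
    qed
    also have "\<dots> \<le> T (c + p)"
      using grid_inf_le[OF b c, of "n * n"] n a unfolding T_def
      by (intro add_mono f_algebra_mult_left_mono[OF FA] f_algebra_mult_right_mono[OF FA])
        (simp_all add: c_def p_def)
    also have "\<dots> = (1 / real n) *\<^sub>R (2 *\<^sub>R (a * a)) + (a * p + p * a)"
      by (simp add: T_def c_def scaleR_2 algebra_simps)
    also have "\<dots> \<le> (1 / real n) *\<^sub>R (2 *\<^sub>R (a * a)) + ((1 / real n) *\<^sub>R (b * b) + (1 / real n) *\<^sub>R (b * b))"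
      using f_algebra_mult_pprt_diff_le[OF FA a b, of "real n"] n
      by (intro add_left_mono add_mono) (simp_all add: p_def)
    also have "\<dots> = (1 / real n) *\<^sub>R M"
      by (simp add: M_def scaleR_2 scaleR_add_right)
    finally show ?thesis .
  qed
  moreover have "0 \<le> M"
    by (simp add: M_def scaleR_nonneg_nonneg add_nonneg_nonneg f_algebra_square_nonneg[OF FA])
  ultimately have "lattice_abs (a * b - b * a) \<le> 0"
    by (intro archimedean_le_0[OF AR])
  then show ?thesis by simp
qed

lemma f_algebra_mult_commute: "a * b = b * (a::'a)"
proof -
  have "a * b = (vl.pprt a + vl.nprt a) * (vl.pprt b + vl.nprt b)"
    "b * a = (vl.pprt b + vl.nprt b) * (vl.pprt a + vl.nprt a)"
    using vl.prts[of a] vl.prts[of b] by simp_all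
  then show ?thesis
    using f_algebra_commute_nonneg[of "vl.pprt a" "vl.pprt b"]
      f_algebra_commute_nonneg[of "vl.pprt a" "- vl.nprt b"]
      f_algebra_commute_nonneg[of "- vl.nprt a" "vl.pprt b"]
      f_algebra_commute_nonneg[of "- vl.nprt a" "- vl.nprt b"]
    by (simp add: algebra_simps)
qed

lemma f_algebra_two_mult_le_squares:
  "(2 * r * t) *\<^sub>R (f * g) \<le> (r * r) *\<^sub>R (f * f) + (t * t) *\<^sub>R (g * (g::'a))"
proof -
  have "(r *\<^sub>R f - t *\<^sub>R g) * (r *\<^sub>R f - t *\<^sub>R g)
      = (r * r) *\<^sub>R (f * f) + (t * t) *\<^sub>R (g * g) - (2 * r * t) *\<^sub>R (f * g)"
    by (simp add: algebra_simps f_algebra_mult_commute[of g f] flip: scaleR_add_left)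
  then show ?thesis
    using f_algebra_square_nonneg[OF FA, of "r *\<^sub>R f - t *\<^sub>R g"] by simp
qed

lemma f_algebra_four_mult_le_scaled_square:
  assumes c: "c > 0"
  shows "4 *\<^sub>R (f * g) - (4 / (c * c)) *\<^sub>R (g * g) \<le> (c *\<^sub>R f) * (c *\<^sub>R (f::'a))"
  using f_algebra_two_mult_le_squares[of c "2 / c" f g] c by (simp add: field_simps diff_le_eq)

lemma f_algebra_four_mult_le_square:
  assumes t: "t > 0"
  shows "4 *\<^sub>R (f * g) \<le> (t *\<^sub>R f + inverse t *\<^sub>R g) * (t *\<^sub>R f + inverse t *\<^sub>R (g::'a))"
proof -
  have "2 *\<^sub>R (f * g) \<le> (t * t) *\<^sub>R (f * f) + (inverse t * inverse t) *\<^sub>R (g * g)"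
    using f_algebra_two_mult_le_squares[of t "inverse t" f g] t by (simp add: mult.assoc)
  moreover have "(t *\<^sub>R f + inverse t *\<^sub>R g) * (t *\<^sub>R f + inverse t *\<^sub>R g)
      = (t * t) *\<^sub>R (f * f) + (inverse t * inverse t) *\<^sub>R (g * g) + 2 *\<^sub>R (f * g)"
    using t by (simp add: algebra_simps f_algebra_mult_commute[of g f] scaleR_2)
  moreover have "4 *\<^sub>R (f * g) = 2 *\<^sub>R (f * g) + 2 *\<^sub>R (f * g)"
    by (simp flip: scaleR_add_left)
  ultimately show ?thesis by simp
qed

lemma f_algebra_square_root_unique:
  assumes SP: "semiprime_over K TYPE('a)"
    and r: "0 \<le> r" and t: "0 \<le> t" and eq: "r * r = t * (t::'a)"
  shows "r = t"
proof -
  define y where "y = r + t"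
  define p where "p = vl.pprt (r - t)"
  define q where "q = vl.pprt (t - r)"
  have y: "0 \<le> y" using r t by (simp add: y_def)
  have pq: "0 \<le> p" "0 \<le> q" "inf p q = 0"
    using inf_pprt_neg_nprt[of "r - t"] vl.pprt_neg[of "r - t"] by (simp_all add: p_def q_def)
  have "p - q = r - t"
    using vl.prts[of "r - t"] vl.pprt_neg[of "r - t"] by (simp add: p_def q_def)
  then have "p * y - q * y = (r - t) * (r + t)"
    by (simp add: y_def flip: left_diff_distrib)
  also have "\<dots> = r * r - t * t"
    by (simp add: algebra_simps f_algebra_mult_commute[of r t])
  finally have "p * y = q * y" using eq by simp
  moreover have "inf (p * y) (q * y) = 0"
    using pq y f_algebra_inf_mult_eq_0[OF FA] by (metis inf_commute)
  ultimately have py: "p * y = 0" and qy: "q * y = 0" by simp_all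
  have vanish: "u = 0" if "0 \<le> u" "u \<le> y" "u * y = 0" for u
  proof -
    have "u * u \<le> u * y" using that by (intro f_algebra_mult_left_mono[OF FA])
    then have "u * u = 0" using that f_algebra_mult_nonneg[OF FA, of u u] by simp
    then show ?thesis using SP semiprime_square_eq_0 by blast
  qed
  have "p \<le> y" "q \<le> y"
    using r t y unfolding p_def q_def vl.pprt_def y_def by (auto simp: vl.minus_le_self_iff)
  then have "p = 0" "q = 0" using vanish pq py qy by simp_all
  with \<open>p - q = r - t\<close> show ?thesis by simp
qed

lemma f_algebra_nth_root_2:
  assumes SP: "semiprime_over K TYPE('a)" and r: "0 \<le> r" and rr: "r * r = a"
  shows "nth_root_exists 2 a \<and> nth_root_A 2 a = (r::'a)"
proof -
  have root: "0 \<le> r \<and> npow r (2 - 1) = a" using r rr by simp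
  have unique: "x = r" if "0 \<le> x \<and> npow x (2 - 1) = a" for x
  proof (rule f_algebra_square_root_unique[OF SP])
    show "x * x = r * r" using that rr by simp
  qed (use that r in simp_all)
  have "nth_root_exists 2 a"
    unfolding nth_root_exists_def using root unique by (rule ex1I)
  moreover have "nth_root_A 2 a = r"
    unfolding nth_root_A_def using root unique by (rule the_equality)
  ultimately show ?thesis ..
qed

end

section \<open>The geometric mean\<close>

text \<open>The ratios \<open>\<rho> ^ k / \<rho> ^ N\<close>, \<open>k < 2 * N\<close>, form a geometric progression through
  \<open>[\<rho> ^ -N, \<rho> ^ N]\<close>; the factor \<open>inverse \<rho>\<close> puts the element for \<open>k\<close> below
  \<open>\<theta> *\<^sub>R f + inverse \<theta> *\<^sub>R g\<close> whenever \<open>\<theta>\<close> lies between the \<open>k\<close>-th and the next ratio.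
  Outside that range \<open>\<rho> ^ N *\<^sub>R f\<close> or \<open>\<rho> ^ N *\<^sub>R g\<close> does the job.\<close>

definition geometric_grid :: "real \<Rightarrow> nat \<Rightarrow> 'a::real_vector \<Rightarrow> 'a \<Rightarrow> 'a set" where
  "geometric_grid \<rho> N f g = {\<rho> ^ N *\<^sub>R f, \<rho> ^ N *\<^sub>R g} \<union>
     (\<lambda>k. inverse \<rho> *\<^sub>R ((\<rho> ^ k / \<rho> ^ N) *\<^sub>R f + (\<rho> ^ N / \<rho> ^ k) *\<^sub>R g)) ` {..<2 * N}"

lemma finite_geometric_grid: "finite (geometric_grid \<rho> N f g)"
  by (simp add: geometric_grid_def)

lemma geometric_grid_nonempty: "geometric_grid \<rho> N f g \<noteq> {}"
  by (simp add: geometric_grid_def)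

lemma geometric_grid_nonneg:
  fixes f g :: "'a::ordered_real_vector"
  assumes "\<rho> > 0" "0 \<le> f" "0 \<le> g" "y \<in> geometric_grid \<rho> N f g"
  shows "0 \<le> y"
  using assms by (auto simp: geometric_grid_def intro!: scaleR_nonneg_nonneg add_nonneg_nonneg)

lemma geometric_grid_below:
  fixes f g :: "'a::ordered_real_vector"
  assumes \<rho>: "\<rho> > 1" and f: "0 \<le> f" and g: "0 \<le> g" and \<theta>: "\<theta> > 0"
  shows "\<exists>y \<in> geometric_grid \<rho> N f g. y \<le> \<theta> *\<^sub>R f + inverse \<theta> *\<^sub>R g"
proof -
  define c where "c = \<rho> ^ N"
  have c: "c > 0" using \<rho> by (simp add: c_def)
  have f\<theta>: "0 \<le> \<theta> *\<^sub>R f" and g\<theta>: "0 \<le> inverse \<theta> *\<^sub>R g"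
    using f g \<theta> by (simp_all add: scaleR_nonneg_nonneg)
  consider "c \<le> \<theta>" | "\<theta> \<le> inverse c" | "inverse c < \<theta>" "\<theta> < c" by linarith
  then show ?thesis
  proof cases
    case 1
    then have "c *\<^sub>R f \<le> \<theta> *\<^sub>R f + inverse \<theta> *\<^sub>R g"
      using f g\<theta> by (simp add: add_increasing2 scaleR_right_mono)
    then show ?thesis by (auto simp: geometric_grid_def c_def)
  next
    case 2
    then have "c \<le> inverse \<theta>" using \<theta> c by (metis inverse_inverse_eq le_imp_inverse_le)
    then have "c *\<^sub>R g \<le> \<theta> *\<^sub>R f + inverse \<theta> *\<^sub>R g"
      using g f\<theta> by (simp add: add_increasing scaleR_right_mono)
    then show ?thesis by (auto simp: geometric_grid_def c_def)
  next
    case 3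
    define t where "t k = \<rho> ^ k / c" for k
    have step: "\<exists>k<M. P k \<and> \<not> P (Suc k)" if "P 0" "\<not> P M" for P and M :: nat
      using that by (induction M) (auto simp: less_Suc_eq)
    have "t (2 * N) = c" using c by (simp add: t_def c_def mult_2 power_add)
    then have "t 0 \<le> \<theta>" "\<not> t (2 * N) \<le> \<theta>"
      using 3 by (simp_all add: t_def divide_inverse)
    then obtain k where "k < 2 * N" "t k \<le> \<theta>" "\<not> t (Suc k) \<le> \<theta>"
      using step[of "\<lambda>k. t k \<le> \<theta>" "2 * N"] by blast
    then have k: "k < 2 * N" "t k \<le> \<theta>" "\<theta> < \<rho> * t k"
      by (simp_all add: t_def)
    have tk: "t k > 0" using \<rho> c by (simp add: t_def)
    have "inverse \<rho> * t k \<le> t k"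
      using \<rho> tk by (intro mult_left_le_one_le) (simp_all add: inverse_le_1_iff)
    then have "inverse \<rho> * t k \<le> \<theta>" using k by linarith
    moreover have "inverse \<rho> * inverse (t k) \<le> inverse \<theta>"
      using k \<theta> by (metis inverse_mult_distrib le_imp_inverse_le less_imp_le)
    ultimately have "inverse \<rho> *\<^sub>R (t k *\<^sub>R f + inverse (t k) *\<^sub>R g) \<le> \<theta> *\<^sub>R f + inverse \<theta> *\<^sub>R g"
      using f g by (simp add: scaleR_add_right add_mono scaleR_right_mono)
    moreover have "inverse \<rho> *\<^sub>R (t k *\<^sub>R f + inverse (t k) *\<^sub>R g) \<in> geometric_grid \<rho> N f g"
      using k(1) by (auto simp: geometric_grid_def t_def c_def)
    ultimately show ?thesis by blast
  qed
qed

context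
  assumes FA: "f_algebra TYPE('a::{real_algebra,ordered_real_vector,lattice})"
    and AR: "archimedean_vl TYPE('a)"
begin

lemma square_sub_le_of_lower_bound:
  assumes f: "0 \<le> f" and g: "0 \<le> g" and \<theta>: "0 \<le> \<theta>"
    and lower: "\<And>\<theta>. \<theta> > 0 \<Longrightarrow> s \<le> \<theta> *\<^sub>R f + inverse \<theta> *\<^sub>R g"
  shows "s * s - 4 *\<^sub>R (f * g) \<le> (s - (2 * \<theta>) *\<^sub>R f) * (s - (2 * \<theta>) *\<^sub>R (f::'a))"
proof (cases "\<theta> = 0")
  case True
  then show ?thesis using f g by (simp add: scaleR_nonneg_nonneg f_algebra_mult_nonneg[OF FA])
next
  case False
  with \<theta> have \<theta>: "\<theta> > 0" by simp
  have "(s - (2 * \<theta>) *\<^sub>R f) * (s - (2 * \<theta>) *\<^sub>R f) - (s * s - 4 *\<^sub>R (f * g))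
      = (4 * \<theta>) *\<^sub>R (f * (\<theta> *\<^sub>R f + inverse \<theta> *\<^sub>R g - s))"
    using \<theta> by (simp add: algebra_simps f_algebra_mult_commute[OF FA AR, of s f] flip: scaleR_add_left)
  moreover have "0 \<le> (4 * \<theta>) *\<^sub>R (f * (\<theta> *\<^sub>R f + inverse \<theta> *\<^sub>R g - s))"
    using \<theta> f lower[OF \<theta>] by (simp add: f_algebra_mult_nonneg[OF FA] scaleR_nonneg_nonneg)
  ultimately show ?thesis by (metis diff_ge_0_iff_ge)
qed

lemma geometric_mean_square_le:
  assumes f: "0 \<le> f" and g: "0 \<le> g" and s: "0 \<le> (s::'a)"
    and lower: "\<And>\<theta>. \<theta> > 0 \<Longrightarrow> s \<le> \<theta> *\<^sub>R f + inverse \<theta> *\<^sub>R g"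
  shows "s * s \<le> 4 *\<^sub>R (f * g)"
proof -
  define D where "D = s * s - 4 *\<^sub>R (f * g)"
  define K where "K = (2 *\<^sub>R f + g) * (2 *\<^sub>R f + g)"
  have D_le: "D \<le> (s - (2 * \<theta>) *\<^sub>R f) * (s - (2 * \<theta>) *\<^sub>R f)" if "\<theta> \<ge> 0" for \<theta>
    unfolding D_def using f g that lower by (rule square_sub_le_of_lower_bound)
  have K: "0 \<le> K" unfolding K_def by (rule f_algebra_square_nonneg[OF FA])
  have "D \<le> (1 / real n) *\<^sub>R K" if n: "n \<ge> 1" for n
  proof -
    define c where "c = (2 / real n) *\<^sub>R f"
    have c: "0 \<le> c" using f by (simp add: c_def scaleR_nonneg_nonneg)
    have "D \<le> grid_inf s c (n * n) * grid_inf s c (n * n)"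
    proof (rule le_map_grid_inf)
      show "D \<le> lattice_abs (s - real j *\<^sub>R c) * lattice_abs (s - real j *\<^sub>R c)" for j
        using D_le[of "real j / real n"] by (simp add: f_algebra_abs_square[OF FA] c_def mult.commute)
    qed (rule f_algebra_square_inf[OF FA])
    also have "\<dots> \<le> ((1 / real n) *\<^sub>R (2 *\<^sub>R f + g)) * ((1 / real n) *\<^sub>R (2 *\<^sub>R f + g))"
      using grid_inf_le_of_lower_bound[OF f g s n lower] n
      by (intro f_algebra_square_mono[OF FA grid_inf_nonneg]) (simp add: c_def)
    finally have "D \<le> (1 / real n) *\<^sub>R ((1 / real n) *\<^sub>R K)" by (simp add: K_def)
    also have "\<dots> \<le> (1 / real n) *\<^sub>R K"
      using n K scaleR_right_mono[of "1 / real n" 1 K] by (intro scaleR_left_mono) simp_all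
    finally show ?thesis .
  qed
  then have "D \<le> 0" using K by (intro archimedean_le_0[OF AR])
  then show ?thesis by (simp add: D_def)
qed

lemma geometric_grid_square_ge:
  assumes \<rho>: "\<rho> > 1" and f: "0 \<le> f" and g: "0 \<le> g" and y: "y \<in> geometric_grid \<rho> N f (g::'a)"
  shows "(4 / \<rho>\<^sup>2) *\<^sub>R (f * g) - (4 / \<rho> ^ (2 * N)) *\<^sub>R (f * f + g * g) \<le> y * y"
    (is "?Z \<le> _")
proof -
  define c where "c = \<rho> ^ N"
  define \<gamma> where "\<gamma> = 4 / (c * c)"
  have c: "c > 0" and cc: "c * c = \<rho> ^ (2 * N)"
    using \<rho> by (simp_all add: c_def power_mult power2_eq_square flip: power_mult_distrib mult_2)
  have fg: "0 \<le> f * g" and ff: "0 \<le> f * f" and gg: "0 \<le> g * g"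
    using f g by (simp_all add: f_algebra_mult_nonneg[OF FA])
  have fg_le: "(4 / \<rho>\<^sup>2) *\<^sub>R (f * g) \<le> 4 *\<^sub>R (f * g)"
    using \<rho> fg by (intro scaleR_right_mono) (simp_all add: field_simps)
  have Z: "?Z = (4 / \<rho>\<^sup>2) *\<^sub>R (f * g) - \<gamma> *\<^sub>R (f * f + g * g)"
    by (simp add: \<gamma>_def cc)
  have Z_le: "?Z \<le> 4 *\<^sub>R (f * g) - \<gamma> *\<^sub>R (g * g)" "?Z \<le> 4 *\<^sub>R (f * g) - \<gamma> *\<^sub>R (f * f)"
    unfolding Z using ff gg by (intro diff_mono fg_le scaleR_left_mono; simp add: \<gamma>_def)+
  consider "y = c *\<^sub>R f" | "y = c *\<^sub>R g"
    | k where "y = inverse \<rho> *\<^sub>R ((\<rho> ^ k / c) *\<^sub>R f + (c / \<rho> ^ k) *\<^sub>R g)"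
    using y by (auto simp: geometric_grid_def c_def)
  then show ?thesis
  proof cases
    case 1
    then show ?thesis
      using Z_le(1) f_algebra_four_mult_le_scaled_square[OF FA AR c, of f g] by (simp add: \<gamma>_def)
  next
    case 2
    then show ?thesis
      using Z_le(2) f_algebra_four_mult_le_scaled_square[OF FA AR c, of g f]
      by (simp add: \<gamma>_def f_algebra_mult_commute[OF FA AR, of g f])
  next
    case (3 k)
    define t where "t = \<rho> ^ k / c"
    have t: "t > 0" "c / \<rho> ^ k = inverse t" using c \<rho> by (simp_all add: t_def)
    have "4 *\<^sub>R (f * g) \<le> (t *\<^sub>R f + inverse t *\<^sub>R g) * (t *\<^sub>R f + inverse t *\<^sub>R g)"
      using t(1) by (rule f_algebra_four_mult_le_square[OF FA AR])
    then have "(inverse \<rho> * inverse \<rho>) *\<^sub>R (4 *\<^sub>R (f * g))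
        \<le> (inverse \<rho> * inverse \<rho>) *\<^sub>R ((t *\<^sub>R f + inverse t *\<^sub>R g) * (t *\<^sub>R f + inverse t *\<^sub>R g))"
      by (rule scaleR_left_mono) simp
    moreover have "y = inverse \<rho> *\<^sub>R (t *\<^sub>R f + inverse t *\<^sub>R g)"
      using 3 by (simp add: t(2) flip: t_def)
    ultimately have "(4 / \<rho>\<^sup>2) *\<^sub>R (f * g) \<le> y * y"
      by (simp add: power2_eq_square divide_inverse mult.commute)
    moreover have "?Z \<le> (4 / \<rho>\<^sup>2) *\<^sub>R (f * g)"
      using ff gg by (simp add: Z \<gamma>_def scaleR_nonneg_nonneg)
    ultimately show ?thesis by order
  qed
qed

lemma geometric_mean_square_ge_approx:
  assumes \<rho>: "\<rho> > 1" and f: "0 \<le> f" and g: "0 \<le> g"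
    and greatest: "\<And>u. (\<And>\<theta>. \<theta> > 0 \<Longrightarrow> u \<le> \<theta> *\<^sub>R f + inverse \<theta> *\<^sub>R g) \<Longrightarrow> u \<le> (s::'a)"
  shows "(4 / \<rho>\<^sup>2) *\<^sub>R (f * g) - (4 / \<rho> ^ (2 * N)) *\<^sub>R (f * f + g * g) \<le> s * s"
    (is "?Z \<le> _")
proof -
  define A where "A = geometric_grid \<rho> N f g"
  have A: "finite A" "A \<noteq> {}" "A \<subseteq> {y. 0 \<le> y}"
    using \<rho> f g geometric_grid_nonneg[of \<rho> f g]
    by (auto simp: A_def finite_geometric_grid geometric_grid_nonempty)
  have le_s: "Inf_fin A \<le> s"
  proof (rule greatest)
    fix \<theta> :: real assume "\<theta> > 0"
    then obtain y where "y \<in> A" "y \<le> \<theta> *\<^sub>R f + inverse \<theta> *\<^sub>R g"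
      using geometric_grid_below[OF \<rho> f g] unfolding A_def by blast
    then show "Inf_fin A \<le> \<theta> *\<^sub>R f + inverse \<theta> *\<^sub>R g"
      using A by (meson Inf_fin.coboundedI order_trans)
  qed
  have hom: "Inf_fin A \<in> {y. 0 \<le> y} \<and> Inf_fin A * Inf_fin A = Inf_fin ((\<lambda>y. y * y) ` A)"
    using A by (intro hom_Inf_fin_on) (auto simp: f_algebra_square_inf[OF FA])
  have "?Z \<le> Inf_fin ((\<lambda>y. y * y) ` A)"
    using A geometric_grid_square_ge[OF \<rho> f g] by (intro Inf_fin.boundedI) (auto simp: A_def)
  also have "\<dots> = Inf_fin A * Inf_fin A" using hom by simp
  also have "\<dots> \<le> s * s" using hom le_s by (intro f_algebra_square_mono[OF FA]) simp_all
  finally show ?thesis .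
qed

lemma geometric_mean_square_ge:
  assumes f: "0 \<le> f" and g: "0 \<le> g"
    and greatest: "\<And>u. (\<And>\<theta>. \<theta> > 0 \<Longrightarrow> u \<le> \<theta> *\<^sub>R f + inverse \<theta> *\<^sub>R g) \<Longrightarrow> u \<le> (s::'a)"
  shows "4 *\<^sub>R (f * g) \<le> s * s"
proof -
  define K where "K = 8 *\<^sub>R (f * g) + (f * f + g * g)"
  have fg: "0 \<le> f * g" and ffgg: "0 \<le> f * f + g * g"
    using f g by (simp_all add: f_algebra_mult_nonneg[OF FA] add_nonneg_nonneg)
  then have K: "0 \<le> K" by (simp add: K_def scaleR_nonneg_nonneg)
  have "4 *\<^sub>R (f * g) - s * s \<le> (1 / real n) *\<^sub>R K" if n: "n \<ge> 1" for n
  proof -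
    define \<rho> where "\<rho> = (real n + 1) / real n"
    have \<rho>: "\<rho> > 1" using n by (simp add: \<rho>_def)
    obtain N where N: "2 * real n < \<rho> ^ N" using real_arch_pow[OF \<rho>] by blast
    have "4 *\<^sub>R (f * g) - s * s
        \<le> 4 *\<^sub>R (f * g) - ((4 / \<rho>\<^sup>2) *\<^sub>R (f * g) - (4 / \<rho> ^ (2 * N)) *\<^sub>R (f * f + g * g))"
      using geometric_mean_square_ge_approx[OF \<rho> f g greatest] by (rule diff_left_mono)
    also have "\<dots> = (4 - 4 / \<rho>\<^sup>2) *\<^sub>R (f * g) + (4 / \<rho> ^ (2 * N)) *\<^sub>R (f * f + g * g)"
      by (simp add: algebra_simps)
    also have "\<dots> \<le> (8 / real n) *\<^sub>R (f * g) + (1 / real n) *\<^sub>R (f * f + g * g)"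
    proof (intro add_mono scaleR_right_mono fg ffgg)
      have "4 - 4 / \<rho>\<^sup>2 = 4 * (2 * real n + 1) / (real n + 1)\<^sup>2"
        unfolding \<rho>_def using n by (simp add: divide_simps) (simp add: algebra_simps power2_eq_square)
      also have "\<dots> \<le> 8 / real n"
        using n by (simp add: field_simps power2_eq_square add_pos_pos)
      finally show "4 - 4 / \<rho>\<^sup>2 \<le> 8 / real n" .
      have "4 * real n \<le> (2 * real n)\<^sup>2" using n by (simp add: power2_eq_square)
      also have "\<dots> \<le> (\<rho> ^ N)\<^sup>2"
        using N n by (intro power_mono) auto
      also have "\<dots> = \<rho> ^ (2 * N)"
        by (metis power_mult mult.commute)
      finally show "4 / \<rho> ^ (2 * N) \<le> 1 / real n"
        using n \<rho> by (simp add: field_simps)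
    qed
    also have "\<dots> = (1 / real n) *\<^sub>R K" by (simp add: K_def scaleR_add_right)
    finally show ?thesis .
  qed
  then have "4 *\<^sub>R (f * g) - s * s \<le> 0" using K by (intro archimedean_le_0[OF AR])
  then show ?thesis by simp
qed

lemma geometric_mean_square:
  assumes f: "0 \<le> f" and g: "0 \<le> g"
    and s: "is_inf_of {\<theta> *\<^sub>R f + inverse \<theta> *\<^sub>R g | \<theta>. \<theta> > 0} s"
  shows "0 \<le> s" "s * s = 4 *\<^sub>R (f * (g::'a))"
proof -
  have lower: "s \<le> \<theta> *\<^sub>R f + inverse \<theta> *\<^sub>R g" if "\<theta> > 0" for \<theta>
    using s that unfolding is_inf_of_def by blast
  have greatest: "u \<le> s" if "\<And>\<theta>. \<theta> > 0 \<Longrightarrow> u \<le> \<theta> *\<^sub>R f + inverse \<theta> *\<^sub>R g" for u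
    using s that unfolding is_inf_of_def by blast
  show "0 \<le> s" using f g by (intro greatest) (simp add: scaleR_nonneg_nonneg)
  then show "s * s = 4 *\<^sub>R (f * g)"
    using geometric_mean_square_le[OF f g _ lower] geometric_mean_square_ge[OF f g greatest]
    by (simp add: order.antisym)
qed

end

lemma the_is_inf_of:
  assumes "is_inf_of S s"
  shows "(THE s. is_inf_of S s) = s"
  using assms by (rule the_equality) (meson assms is_inf_of_def order.antisym)

theorem proposition2p1:
  fixes K_is_C :: bool and f g :: "'a::{real_algebra,ordered_real_vector,lattice}"
  assumes "archimedean_f_algebra_over K_is_C TYPE('a)"
    and "semiprime_over K_is_C TYPE('a)"
    and "geometric_mean_closed TYPE('a)"
    and "0 \<le> f" and "0 \<le> g"
  shows "nth_root_exists 2 (f * g) \<and> f \<boxtimes> g = nth_root_A 2 (f * g)"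
proof -
  have FA: "f_algebra TYPE('a)" and AR: "archimedean_vl TYPE('a)"
    using assms(1) by (simp_all add: archimedean_f_algebra_over_def)
  obtain s where s: "is_inf_of {\<theta> *\<^sub>R f + inverse \<theta> *\<^sub>R g | \<theta>. \<theta> > 0} s"
    using assms(3-5) unfolding geometric_mean_closed_def by blast
  have "0 \<le> (1/2) *\<^sub>R s" "(1/2) *\<^sub>R s * (1/2) *\<^sub>R s = f * g"
    using geometric_mean_square[OF FA AR assms(4,5) s] by (simp_all add: scaleR_nonneg_nonneg)
  then have "nth_root_exists 2 (f * g) \<and> nth_root_A 2 (f * g) = (1/2) *\<^sub>R s"
    by (rule f_algebra_nth_root_2[OF FA AR assms(2)])
  moreover have "f \<boxtimes> g = (1/2) *\<^sub>R s"
    unfolding gmean_def the_is_inf_of[OF s] ..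
  ultimately show ?thesis by simp
qed

end
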